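(* Let $\Delta$ be a quasi-forest of dimension $d-1$ with $s+1$ facets and $f$-vector $(f_0,\ldots,f_{d-1})$, and put $f_{-1}=1$. Then there exist an integer $t$ with $0\le t\le s$ and sequences of integers $(\delta_1,\ldots,\delta_t,\delta_{t+1})$ and $(e_1,\ldots,e_t)$ with $\delta_i\neq e_j$ for all $i,j$, such that $0<\delta_1\le\cdots\le\delta_t\le\delta_{t+1}=d$, $0\le e_1\le\cdots\le e_t<d$, $e_j<\delta_j$ for $1\le j\le t$, and $$\sum_{i=0}^{d} f_{i-1}x^i=\sum_{j=1}^{t+1}(1+x)^{\delta_j}-\sum_{j=1}^{t}(1+x)^{e_j}.$$
   Context: A simplicial complex $\Delta$ on $[n]$ is a collection of subsets of $[n]$ containing all singletons and closed under taking subsets; $\dim\Delta=d-1$ where $d$ is the maximal face size; facets are maximal faces; $f_i$ is the number of faces with $i+1$ elements. For facets $F_{i_1},\ldots,F_{i_q}$, $\langle F_{i_1},\ldots,F_{i_q}\rangle$ is the subcomplex of all faces contained in some $F_{i_j}$. A facet $F$ is a leaf if there is another facet $G\neq F$ with $H\cap F\subset G\cap F$ for all facets $H\neq F$. A quasi-forest is a simplicial complex whose facets admit an ordering $H_1,\ldots,H_m$ such that for each $1<j\le m$, $H_j$ is a leaf of $\langle H_1,\ldots,H_j\rangle$. *)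

theory Defs
  imports "HOL-Computational_Algebra.Polynomial"
begin

definition simplicial_complex :: "nat \<Rightarrow> nat set set \<Rightarrow> bool" where
  "simplicial_complex n \<Delta> \<longleftrightarrow>
     \<Delta> \<subseteq> Pow {1..n} \<and> (\<forall>i\<in>{1..n}. {i} \<in> \<Delta>) \<and>
     (\<forall>F\<in>\<Delta>. \<forall>G. G \<subseteq> F \<longrightarrow> G \<in> \<Delta>)"

definition facets :: "'a set set \<Rightarrow> 'a set set" where
  "facets \<Delta> = {F \<in> \<Delta>. \<forall>G\<in>\<Delta>. F \<subseteq> G \<longrightarrow> G = F}"

text \<open>Maximal face size d (so dim = d - 1).\<close>
definition max_face_size :: "'a set set \<Rightarrow> nat" where
  "max_face_size \<Delta> = Max (card ` \<Delta>)"

text \<open>Number of faces with k elements; f_i = face_count \<Delta> (i+1), f_{-1} = face_count \<Delta> 0.\<close>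
definition face_count :: "'a set set \<Rightarrow> nat \<Rightarrow> nat" where
  "face_count \<Delta> k = card {A \<in> \<Delta>. card A = k}"

definition gen_complex :: "'a set set \<Rightarrow> 'a set set" where
  "gen_complex S = {A. \<exists>F\<in>S. A \<subseteq> F}"

definition is_leaf :: "'a set set \<Rightarrow> 'a set \<Rightarrow> bool" where
  "is_leaf \<Delta> F \<longleftrightarrow> F \<in> facets \<Delta> \<and>
     (\<exists>G\<in>facets \<Delta>. G \<noteq> F \<and> (\<forall>H\<in>facets \<Delta>. H \<noteq> F \<longrightarrow> H \<inter> F \<subseteq> G \<inter> F))"

text \<open>Quasi-forest: facets admit an ordering H_1,...,H_m (here the list Hs, 0-indexed)
such that H_j is a leaf of the subcomplex generated by H_1,...,H_j for 1 < j \<le> m.\<close>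
definition quasi_forest :: "'a set set \<Rightarrow> bool" where
  "quasi_forest \<Delta> \<longleftrightarrow> (\<exists>Hs. distinct Hs \<and> set Hs = facets \<Delta> \<and>
     (\<forall>j. 1 \<le> j \<and> j < length Hs \<longrightarrow> is_leaf (gen_complex (set (take (Suc j) Hs))) (Hs ! j)))"

end

theory Submission
  imports Defs
begin

text \<open>Write the f-polynomial as the sum of x^|A| over all faces A, so that the full simplex on a
facet H contributes (1 + x)^|H|. Adding the facets in leaf order, each new facet H meets the
complex built so far exactly in the simplex on G \<inter> H, where G is its branch. By
inclusion-exclusion the polynomial is the sum of (1 + x)^|H| over all facets minus the sum of
(1 + x)^|G \<inter> H| over all but the first, and every subtracted exponent is smaller than both |H|
and |G|. This Hall-type domination of the subtracted exponents by the facet sizes survives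
cancelling the exponents common to both sides, and after sorting it says e_j < \<delta>_j; the
largest \<delta>_j is the largest facet size d.\<close>

definition face_poly :: "'a set set \<Rightarrow> int poly" where
  "face_poly \<Delta> = (\<Sum>A\<in>\<Delta>. [:0, 1:] ^ card A)"

lemma face_poly_Pow:
  assumes "finite H"
  shows "face_poly (Pow H) = [:1, 1:] ^ card H"
proof -
  have "[:1, 1:] ^ card H = (\<Prod>x\<in>H. [:0, 1:] + 1 :: int poly)"
    by (simp add: one_pCons)
  also have "\<dots> = face_poly (Pow H)"
    unfolding prod_add[OF assms] face_poly_def by simp
  finally show ?thesis ..
qed

lemma face_poly_Un:
  "finite A \<Longrightarrow> finite B \<Longrightarrow> face_poly (A \<union> B) = face_poly A + face_poly B - face_poly (A \<inter> B)"
  unfolding face_poly_def using sum.union_inter[of A B] by (simp add: algebra_simps)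

lemma face_poly_eq_face_counts:
  assumes "finite \<Delta>" "\<forall>A\<in>\<Delta>. card A \<le> d"
  shows "(\<Sum>i=0..d. monom (int (face_count \<Delta> i)) i) = face_poly \<Delta>"
proof -
  have "face_poly \<Delta> = (\<Sum>i=0..d. \<Sum>A\<in>{A\<in>\<Delta>. card A = i}. [:0, 1:] ^ i)"
    unfolding face_poly_def using assms
    by (subst sum.group[symmetric, of _ "{0..d}" card]) (auto intro!: sum.cong)
  also have "\<dots> = (\<Sum>i=0..d. monom (int (face_count \<Delta> i)) i)"
    by (simp add: face_count_def monom_altdef of_nat_poly)
  finally show ?thesis ..
qed

lemma gen_complex_eq_Union_Pow: "gen_complex S = (\<Union>F\<in>S. Pow F)"
  unfolding gen_complex_def by auto

lemma gen_complex_insert: "gen_complex (insert H S) = gen_complex S \<union> Pow H"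
  unfolding gen_complex_def by auto

lemma gen_complex_Int_Pow:
  assumes "G \<in> S" "\<forall>F\<in>S. F \<inter> H \<subseteq> G \<inter> H"
  shows "gen_complex S \<inter> Pow H = Pow (G \<inter> H)"
  using assms unfolding gen_complex_def by blast

lemma facets_gen_complex:
  assumes "\<forall>F\<in>S. \<forall>G\<in>S. F \<subseteq> G \<longrightarrow> F = G"
  shows "facets (gen_complex S) = S"
proof
  show "facets (gen_complex S) \<subseteq> S"
    unfolding facets_def gen_complex_def by auto
  show "S \<subseteq> facets (gen_complex S)"
    using assms unfolding facets_def gen_complex_def by (auto dest: subset_trans)
qed

lemma facet_subset_facet:
  "F \<in> facets \<Delta> \<Longrightarrow> G \<in> facets \<Delta> \<Longrightarrow> F \<subseteq> G \<Longrightarrow> F = G"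
  unfolding facets_def by auto

lemma face_subset_facet:
  assumes "finite \<Delta>" "A \<in> \<Delta>"
  obtains F where "F \<in> facets \<Delta>" "A \<subseteq> F"
proof -
  obtain F where "F \<in> \<Delta>" "A \<subseteq> F" "\<forall>G\<in>\<Delta>. F \<subseteq> G \<longrightarrow> G = F"
    using finite_has_maximal2[OF assms] by metis
  then show thesis
    by (intro that[of F]) (simp_all add: facets_def)
qed

lemma gen_complex_facets:
  assumes "finite \<Delta>" "\<forall>F\<in>\<Delta>. Pow F \<subseteq> \<Delta>"
  shows "gen_complex (facets \<Delta>) = \<Delta>"
proof
  show "gen_complex (facets \<Delta>) \<subseteq> \<Delta>"
    using assms(2) unfolding gen_complex_def facets_def by auto
  show "\<Delta> \<subseteq> gen_complex (facets \<Delta>)"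
  proof
    fix A assume "A \<in> \<Delta>"
    then obtain F where "F \<in> facets \<Delta>" "A \<subseteq> F"
      using face_subset_facet[OF assms(1)] by blast
    then show "A \<in> gen_complex (facets \<Delta>)"
      unfolding gen_complex_def by blast
  qed
qed

lemma max_face_size_facets:
  assumes "finite \<Delta>" "\<forall>F\<in>\<Delta>. finite F"
  shows "max_face_size \<Delta> = Max (card ` facets \<Delta>)"
proof (cases "\<Delta> = {}")
  case False
  have sub: "facets \<Delta> \<subseteq> \<Delta>"
    unfolding facets_def by auto
  have fin: "finite (card ` facets \<Delta>)"
    using assms(1) sub finite_subset by blast
  have "card A \<le> Max (card ` facets \<Delta>)" if A: "A \<in> \<Delta>" for A
  proof -
    obtain F where F: "F \<in> facets \<Delta>" "A \<subseteq> F"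
      using face_subset_facet[OF assms(1) A] .
    then have "card A \<le> card F"
      using assms(2) sub by (intro card_mono) auto
    also have "\<dots> \<le> Max (card ` facets \<Delta>)"
      using F(1) fin by simp
    finally show ?thesis .
  qed
  then have "Max (card ` \<Delta>) \<le> Max (card ` facets \<Delta>)"
    using assms(1) False by (simp add: Max_le_iff)
  moreover have "Max (card ` facets \<Delta>) \<le> Max (card ` \<Delta>)"
    using assms(1) sub False by (intro Max_mono) (auto elim: face_subset_facet)
  ultimately show ?thesis
    unfolding max_face_size_def by (rule antisym)
qed (simp add: max_face_size_def facets_def)

lemma simplicial_complex_finite:
  assumes "simplicial_complex n \<Delta>"
  shows "finite \<Delta>" "\<forall>F\<in>\<Delta>. finite F"
  using assms unfolding simplicial_complex_def by (auto intro: finite_subset)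

lemma facet_nonempty:
  "A \<in> \<Delta> \<Longrightarrow> A \<noteq> {} \<Longrightarrow> F \<in> facets \<Delta> \<Longrightarrow> F \<noteq> {}"
  unfolding facets_def by blast

definition facet_sizes :: "'a set set \<Rightarrow> nat multiset" where
  "facet_sizes \<Delta> = image_mset card (mset_set (facets \<Delta>))"

lemma finite_facets: "finite \<Delta> \<Longrightarrow> finite (facets \<Delta>)"
  unfolding facets_def by simp

lemma size_facet_sizes: "finite \<Delta> \<Longrightarrow> size (facet_sizes \<Delta>) = card (facets \<Delta>)"
  unfolding facet_sizes_def by simp

lemma set_mset_facet_sizes: "finite \<Delta> \<Longrightarrow> set_mset (facet_sizes \<Delta>) = card ` facets \<Delta>"
  unfolding facet_sizes_def by (simp add: finite_facets)

lemma Max_mset_facet_sizes: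
  "finite \<Delta> \<Longrightarrow> \<forall>F\<in>\<Delta>. finite F \<Longrightarrow> Max_mset (facet_sizes \<Delta>) = max_face_size \<Delta>"
  by (simp add: set_mset_facet_sizes max_face_size_facets)

lemma facet_sizes_pos:
  assumes "finite \<Delta>" "\<forall>F\<in>\<Delta>. finite F" "A \<in> \<Delta>" "A \<noteq> {}" "k \<in># facet_sizes \<Delta>"
  shows "0 < k"
proof -
  obtain F where "F \<in> facets \<Delta>" "k = card F"
    using assms(1,5) by (auto simp: set_mset_facet_sizes)
  moreover have "F \<noteq> {}" "finite F"
    using calculation(1) facet_nonempty[OF assms(3,4)] assms(2) unfolding facets_def by auto
  ultimately show ?thesis
    by (simp add: card_gt_0_iff)
qed

text \<open>A counting form of \<open>the j-th smallest element of E is smaller than the j-th smallest element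
of D\<close>. Unlike the sorted form, it is visibly preserved by adding a pair c < a where c is also
below an old element of D, and by cancelling common elements.\<close>

definition strictly_dominated :: "'a::linorder multiset \<Rightarrow> 'a multiset \<Rightarrow> bool" where
  "strictly_dominated E D \<longleftrightarrow>
     (\<forall>v. (\<exists>x\<in>#E. v \<le> x) \<longrightarrow> size {#x\<in>#E. v \<le> x#} < size {#x\<in>#D. v < x#})"

lemma strictly_dominated_empty [simp]: "strictly_dominated {#} D"
  unfolding strictly_dominated_def by simp

lemma strictly_dominated_add_mset:
  assumes dom: "strictly_dominated E D" and "b \<in># D" "c < a" "c < b"
  shows "strictly_dominated (add_mset c E) (add_mset a D)"
  unfolding strictly_dominated_def
proof (intro allI impI)
  fix v assume "\<exists>x\<in>#add_mset c E. v \<le> x"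
  show "size {#x\<in>#add_mset c E. v \<le> x#} < size {#x\<in>#add_mset a D. v < x#}"
  proof (cases "v \<le> c")
    case True
    have "size {#x\<in>#E. v \<le> x#} < size {#x\<in>#D. v < x#}"
    proof (cases "\<exists>x\<in>#E. v \<le> x")
      case False
      have "b \<in># {#x\<in>#D. v < x#}"
        using assms True by simp
      then have "0 < size {#x\<in>#D. v < x#}"
        using nonempty_has_size by force
      moreover have "size {#x\<in>#E. v \<le> x#} = 0"
        using False by (simp add: filter_mset_eq_mempty_iff)
      ultimately show ?thesis by linarith
    qed (use dom in \<open>simp add: strictly_dominated_def\<close>)
    moreover have "v < a"
      using True \<open>c < a\<close> by (rule le_less_trans)
    ultimately show ?thesis
      using True by simp
  next
    case False
    with \<open>\<exists>x\<in>#add_mset c E. v \<le> x\<close> have "size {#x\<in>#E. v \<le> x#} < size {#x\<in>#D. v < x#}"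
      using dom unfolding strictly_dominated_def by auto
    with False show ?thesis by simp
  qed
qed

lemma strictly_dominated_add_mset_cancel:
  assumes "strictly_dominated (add_mset w E) (add_mset w D)"
  shows "strictly_dominated E D"
  unfolding strictly_dominated_def
proof (intro allI impI)
  fix v assume "\<exists>x\<in>#E. v \<le> x"
  then have "size {#x\<in>#add_mset w E. v \<le> x#} < size {#x\<in>#add_mset w D. v < x#}"
    using assms unfolding strictly_dominated_def by auto
  then show "size {#x\<in>#E. v \<le> x#} < size {#x\<in>#D. v < x#}"
    by (cases "w = v") (auto split: if_splits)
qed

lemma strictly_dominated_cancel:
  "strictly_dominated (E + R) (D + R) \<Longrightarrow> strictly_dominated E D"
  by (induction R) (auto dest: strictly_dominated_add_mset_cancel)

lemma strictly_dominated_less: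
  assumes "strictly_dominated E D" "v \<in># E"
  obtains x where "x \<in># D" "v < x"
proof -
  have "\<exists>x\<in>#E. v \<le> x"
    using assms(2) by auto
  then have "size {#x\<in>#E. v \<le> x#} < size {#x\<in>#D. v < x#}"
    using assms(1) strictly_dominated_def by auto
  then have "{#x\<in>#D. v < x#} \<noteq> {#}"
    unfolding nonempty_has_size by linarith
  then obtain x where "x \<in># {#x\<in>#D. v < x#}"
    by (rule multiset_nonemptyE)
  then show thesis
    by (intro that) auto
qed

lemma Max_mset_notin_if_strictly_dominated:
  assumes "strictly_dominated E D"
  shows "Max_mset D \<notin># E"
proof
  assume "Max_mset D \<in># E"
  with assms obtain x where "x \<in># D" "Max_mset D < x"
    by (rule strictly_dominated_less)
  then show False
    by (meson Max_ge finite_set_mset leD)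
qed

lemma strictly_dominated_remove_common:
  assumes dom: "strictly_dominated E D"
  obtains R D' E' where "D = D' + R" "E = E' + R" "strictly_dominated E' D'"
    "set_mset D' \<inter> set_mset E' = {}" "Max_mset D' = Max_mset D"
proof
  show D: "D = (D - E) + D \<inter># E" and E: "E = (E - D) + D \<inter># E"
    by (simp_all add: multiset_eq_iff min_def)
  show "strictly_dominated (E - D) (D - E)"
    using dom by (subst (asm) D, subst (asm) E) (rule strictly_dominated_cancel)
  show "set_mset (D - E) \<inter> set_mset (E - D) = {}"
    by (auto simp: in_diff_count)
  show "Max_mset (D - E) = Max_mset D"
  proof (cases "D = {#}")
    case False
    have "Max_mset D \<in># D - E"
      using False Max_mset_notin_if_strictly_dominated[OF dom]
      by (simp add: in_diff_count not_in_iff)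
    then show ?thesis
      by (intro Max_eqI) (auto dest: in_diffD intro: Max_ge)
  qed simp
qed

lemma sorted_length_filter_ge_nth:
  assumes "sorted xs" "i < length xs"
  shows "length xs - i \<le> length (filter (\<lambda>x. xs ! i \<le> x) xs)"
proof -
  have "\<forall>x\<in>set (drop i xs). xs ! i \<le> x"
    using assms by (auto simp: in_set_conv_nth intro!: sorted_nth_mono)
  then have "length (drop i xs) = length (filter (\<lambda>x. xs ! i \<le> x) (drop i xs))"
    by simp
  also have "\<dots> \<le> length (filter (\<lambda>x. xs ! i \<le> x) xs)"
    by (metis append_take_drop_id filter_append length_append le_add2)
  finally show ?thesis
    by simp
qed

lemma sorted_length_filter_gt_le:
  assumes "sorted xs" "i < length xs" "xs ! i \<le> v"
  shows "length (filter (\<lambda>x. v < x) xs) \<le> length xs - Suc i"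
proof -
  have "\<forall>x\<in>set (take (Suc i) xs). \<not> v < x"
    using assms by (auto simp: in_set_conv_nth less_Suc_eq_le)
      (meson leD order_trans sorted_nth_mono)
  then have "filter (\<lambda>x. v < x) xs = filter (\<lambda>x. v < x) (drop (Suc i) xs)"
    by (metis append_take_drop_id filter_append filter_False append_Nil)
  then show ?thesis
    by (metis length_drop length_filter_le)
qed

text \<open>Indexed from 1, like \<delta>_1, ..., \<delta>_(t+1); index 0 gives the same value as index 1.\<close>

definition sorted_entry :: "'a::linorder multiset \<Rightarrow> nat \<Rightarrow> 'a" where
  "sorted_entry M j = sorted_list_of_multiset M ! (j - 1)"

lemma length_sorted_list_of_multiset [simp]: "length (sorted_list_of_multiset M) = size M"
  using size_mset[of "sorted_list_of_multiset M"] by simp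

lemma sorted_entry_mono:
  "1 \<le> i \<Longrightarrow> i \<le> j \<Longrightarrow> j \<le> size M \<Longrightarrow> sorted_entry M i \<le> sorted_entry M j"
  unfolding sorted_entry_def by (intro sorted_nth_mono) auto

lemma sorted_entry_in:
  "1 \<le> j \<Longrightarrow> j \<le> size M \<Longrightarrow> sorted_entry M j \<in># M"
proof -
  assume "1 \<le> j" "j \<le> size M"
  then have "j - 1 < length (sorted_list_of_multiset M)"
    by simp
  then have "sorted_list_of_multiset M ! (j - 1) \<in> set (sorted_list_of_multiset M)"
    by (rule nth_mem)
  then show ?thesis
    unfolding sorted_entry_def by simp
qed

lemma sorted_entry_size:
  assumes "M \<noteq> {#}"
  shows "sorted_entry M (size M) = Max_mset M"
proof (rule Max_eqI[symmetric])
  show "sorted_entry M (size M) \<in># M"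
    using assms unfolding nonempty_has_size by (intro sorted_entry_in) auto
  fix y assume "y \<in># M"
  then obtain i where "i < size M" "y = sorted_list_of_multiset M ! i"
    by (metis in_set_conv_nth length_sorted_list_of_multiset set_sorted_list_of_multiset)
  then show "y \<le> sorted_entry M (size M)"
    unfolding sorted_entry_def by (auto intro: sorted_nth_mono)
qed simp

lemma sum_sorted_entry: "(\<Sum>j=1..size M. f (sorted_entry M j)) = (\<Sum>x\<in>#M. f x)"
proof -
  have "(\<Sum>j=1..size M. f (sorted_entry M j)) = (\<Sum>i<size M. f (sorted_list_of_multiset M ! i))"
    unfolding sorted_entry_def by (simp add: sum.atLeast1_atMost_eq)
  also have "\<dots> = sum_list (map f (sorted_list_of_multiset M))"
    by (simp add: sum_list_sum_nth atLeast0LessThan)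
  also have "\<dots> = (\<Sum>x\<in>#M. f x)"
    by (simp flip: sum_mset_sum_list)
  finally show ?thesis .
qed

lemma size_filter_mset_eq_length_filter:
  "size {#x\<in>#M. P x#} = length (filter P (sorted_list_of_multiset M))"
  by (metis mset_filter mset_sorted_list_of_multiset size_mset)

lemma sorted_entry_less_if_strictly_dominated:
  assumes dom: "strictly_dominated E D" and size: "size D = size E + 1"
    and j: "1 \<le> j" "j \<le> size E"
  shows "sorted_entry E j < sorted_entry D j"
proof (rule ccontr)
  define xs where "xs = sorted_list_of_multiset D"
  define ys where "ys = sorted_list_of_multiset E"
  define v where "v = sorted_entry E j"
  txt \<open>If the j-th entry of D is at most v, only size E + 1 - j entries of D exceed v, while the
    entries j, ..., size E of E are all at least v.\<close>
  assume "\<not> sorted_entry E j < sorted_entry D j"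
  then have "xs ! (j - 1) \<le> v"
    by (simp add: sorted_entry_def xs_def v_def)
  then have "length (filter (\<lambda>x. v < x) xs) \<le> size E + 1 - j"
    using sorted_length_filter_gt_le[of xs "j - 1" v] j size by (simp add: xs_def)
  moreover have "size E + 1 - j \<le> length (filter (\<lambda>x. v \<le> x) ys)"
    using sorted_length_filter_ge_nth[of ys "j - 1"] j by (simp add: ys_def v_def sorted_entry_def)
  moreover have "size {#x\<in>#E. v \<le> x#} < size {#x\<in>#D. v < x#}"
    using dom sorted_entry_in[OF j] unfolding strictly_dominated_def v_def by auto
  ultimately show False
    by (simp add: size_filter_mset_eq_length_filter xs_def ys_def)
qed

lemma sorted_entries_if_strictly_dominated:
  assumes dom: "strictly_dominated E D" and disj: "set_mset D \<inter> set_mset E = {}"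
    and size: "size D = size E + 1"
  shows "\<forall>i\<in>{1..size E + 1}. \<forall>j\<in>{1..size E}. sorted_entry D i \<noteq> sorted_entry E j"
    and "\<forall>j\<in>{1..size E}. sorted_entry D j \<le> sorted_entry D (j + 1)"
    and "\<forall>j. 1 \<le> j \<and> j < size E \<longrightarrow> sorted_entry E j \<le> sorted_entry E (j + 1)"
    and "\<forall>j\<in>{1..size E}. sorted_entry E j < sorted_entry D j"
    and "\<forall>j\<in>{1..size E}. sorted_entry E j < sorted_entry D (size E + 1)"
    and "sorted_entry D 1 \<in># D"
    and "sorted_entry D (size E + 1) = Max_mset D"
    and "(\<Sum>j=1..size E + 1. f (sorted_entry D j)) = (\<Sum>x\<in>#D. f x)"
    and "(\<Sum>j=1..size E. f (sorted_entry E j)) = (\<Sum>x\<in>#E. f x)"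
proof -
  have D_in: "sorted_entry D i \<in># D" if "i \<in> {1..size E + 1}" for i
    using that size by (intro sorted_entry_in) auto
  have E_in: "sorted_entry E j \<in># E" if "j \<in> {1..size E}" for j
    using that by (intro sorted_entry_in) auto
  have less: "sorted_entry E j < sorted_entry D j" if "j \<in> {1..size E}" for j
    using that by (intro sorted_entry_less_if_strictly_dominated[OF dom size]) auto
  show "\<forall>i\<in>{1..size E + 1}. \<forall>j\<in>{1..size E}. sorted_entry D i \<noteq> sorted_entry E j"
    using D_in E_in disj by (metis disjoint_iff)
  show "\<forall>j\<in>{1..size E}. sorted_entry D j \<le> sorted_entry D (j + 1)"
    using size by (auto intro: sorted_entry_mono)
  show "\<forall>j. 1 \<le> j \<and> j < size E \<longrightarrow> sorted_entry E j \<le> sorted_entry E (j + 1)"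
    by (auto intro: sorted_entry_mono)
  show "\<forall>j\<in>{1..size E}. sorted_entry E j < sorted_entry D j"
    using less by blast
  show "\<forall>j\<in>{1..size E}. sorted_entry E j < sorted_entry D (size E + 1)"
  proof
    fix j assume j: "j \<in> {1..size E}"
    have "sorted_entry D j \<le> sorted_entry D (size E + 1)"
      using j size by (intro sorted_entry_mono) auto
    with less[OF j] show "sorted_entry E j < sorted_entry D (size E + 1)"
      by simp
  qed
  show "sorted_entry D 1 \<in># D"
    by (rule D_in) simp
  have "D \<noteq> {#}"
    using size by auto
  then show "sorted_entry D (size E + 1) = Max_mset D"
    using sorted_entry_size[of D] size by simp
  show "(\<Sum>j=1..size E + 1. f (sorted_entry D j)) = (\<Sum>x\<in>#D. f x)"
    using sum_sorted_entry[of f D] size by simp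
  show "(\<Sum>j=1..size E. f (sorted_entry E j)) = (\<Sum>x\<in>#E. f x)"
    by (rule sum_sorted_entry)
qed

lemma face_poly_gen_complex_insert:
  assumes "finite S" "\<forall>F\<in>S. finite F" "finite H"
    and "G \<in> S" "\<forall>F\<in>S. F \<inter> H \<subseteq> G \<inter> H"
  shows "face_poly (gen_complex (insert H S)) =
    face_poly (gen_complex S) + [:1, 1:] ^ card H - [:1, 1:] ^ card (G \<inter> H)"
proof -
  have "finite (gen_complex S)"
    using assms(1,2) by (simp add: gen_complex_eq_Union_Pow)
  then have "face_poly (gen_complex (insert H S)) =
      face_poly (gen_complex S) + face_poly (Pow H) - face_poly (Pow (G \<inter> H))"
    using assms(3) by (simp add: gen_complex_insert face_poly_Un gen_complex_Int_Pow[OF assms(4,5)])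
  then show ?thesis
    using assms(3) by (simp add: face_poly_Pow del: Pow_Int_eq)
qed

definition leaf_order :: "'a set list \<Rightarrow> bool" where
  "leaf_order Hs \<longleftrightarrow>
     (\<forall>j. 1 \<le> j \<and> j < length Hs \<longrightarrow> is_leaf (gen_complex (set (take (Suc j) Hs))) (Hs ! j))"

lemma leaf_order_snoc:
  "leaf_order (Hs @ [H]) \<longleftrightarrow>
     leaf_order Hs \<and> (Hs \<noteq> [] \<longrightarrow> is_leaf (gen_complex (insert H (set Hs))) H)"
proof -
  have "leaf_order (Hs @ [H]) \<longleftrightarrow> leaf_order Hs \<and>
      (1 \<le> length Hs \<longrightarrow> is_leaf (gen_complex (set (Hs @ [H]))) H)"
    unfolding leaf_order_def
    by (auto simp: nth_append less_Suc_eq)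
  then show ?thesis
    by (auto simp: Suc_le_eq)
qed

lemma face_poly_gen_complex_leaf_order:
  assumes "Hs \<noteq> []" "distinct Hs" "leaf_order Hs"
    and "\<forall>F\<in>set Hs. \<forall>G\<in>set Hs. F \<subseteq> G \<longrightarrow> F = G" "\<forall>F\<in>set Hs. finite F"
  shows "\<exists>E. size E + 1 = length Hs \<and> strictly_dominated E (mset (map card Hs)) \<and>
    face_poly (gen_complex (set Hs)) =
      (\<Sum>k\<in>#mset (map card Hs). [:1, 1:] ^ k) - (\<Sum>k\<in>#E. [:1, 1:] ^ k)"
  using assms
proof (induction Hs rule: rev_induct)
  case Nil
  then show ?case by simp
next
  case (snoc H Hs)
  let ?S = "set Hs"
  show ?case
  proof (cases "Hs = []")
    case True
    have "gen_complex {H} = Pow H"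
      unfolding gen_complex_def by auto
    then show ?thesis
      using True snoc.prems by (intro exI[of _ "{#}"]) (simp add: face_poly_Pow)
  next
    case False
    obtain E where E: "size E + 1 = length Hs" "strictly_dominated E (mset (map card Hs))"
      "face_poly (gen_complex ?S) =
         (\<Sum>k\<in>#mset (map card Hs). [:1, 1:] ^ k) - (\<Sum>k\<in>#E. [:1, 1:] ^ k)"
      using snoc False by (auto simp: leaf_order_snoc)
    have "H \<notin> ?S"
      using snoc.prems(2) by simp
    have "is_leaf (gen_complex (insert H ?S)) H"
      using snoc.prems(3) False by (simp add: leaf_order_snoc)
    moreover have "facets (gen_complex (insert H ?S)) = insert H ?S"
      using snoc.prems(4) by (intro facets_gen_complex) simp
    ultimately obtain G where G: "G \<in> ?S" "G \<noteq> H" "\<forall>F\<in>?S. F \<inter> H \<subseteq> G \<inter> H"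
      unfolding is_leaf_def using \<open>H \<notin> ?S\<close> by (metis insert_iff)
    have "finite G" "finite H" "\<not> G \<subseteq> H" "\<not> H \<subseteq> G"
      using snoc.prems(4,5) G by auto
    then have "card (G \<inter> H) < card G" "card (G \<inter> H) < card H"
      by (auto intro!: psubset_card_mono)
    then have "strictly_dominated (add_mset (card (G \<inter> H)) E) (add_mset (card H) (mset (map card Hs)))"
      using G(1) by (intro strictly_dominated_add_mset[OF E(2), of "card G"]) auto
    moreover have "face_poly (gen_complex (insert H ?S)) =
        face_poly (gen_complex ?S) + [:1, 1:] ^ card H - [:1, 1:] ^ card (G \<inter> H)"
      using snoc.prems(5) G by (intro face_poly_gen_complex_insert) auto
    ultimately show ?thesis
      using E(1,3) by (intro exI[of _ "add_mset (card (G \<inter> H)) E"]) (simp add: algebra_simps)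
  qed
qed

lemma quasi_forest_face_poly:
  assumes "quasi_forest \<Delta>" "finite \<Delta>" "\<forall>F\<in>\<Delta>. Pow F \<subseteq> \<Delta>" "\<Delta> \<noteq> {}"
  shows "\<exists>E. size E + 1 = card (facets \<Delta>) \<and> strictly_dominated E (facet_sizes \<Delta>) \<and>
    face_poly \<Delta> = (\<Sum>k\<in>#facet_sizes \<Delta>. [:1, 1:] ^ k) - (\<Sum>k\<in>#E. [:1, 1:] ^ k)"
proof -
  obtain Hs where Hs: "distinct Hs" "set Hs = facets \<Delta>" "leaf_order Hs"
    using assms(1) unfolding quasi_forest_def leaf_order_def by blast
  obtain A where "A \<in> \<Delta>"
    using assms(4) by blast
  then obtain F where "F \<in> facets \<Delta>"
    using face_subset_facet[OF assms(2)] by blast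
  then have "Hs \<noteq> []"
    using Hs(2) by auto
  moreover have "\<forall>F\<in>set Hs. \<forall>G\<in>set Hs. F \<subseteq> G \<longrightarrow> F = G"
    using Hs(2) facet_subset_facet by blast
  moreover have "\<forall>F\<in>set Hs. finite F"
  proof
    fix F assume "F \<in> set Hs"
    then have "Pow F \<subseteq> \<Delta>"
      using Hs(2) assms(3) unfolding facets_def by auto
    then show "finite F"
      using assms(2) finite_subset finite_Pow_iff by blast
  qed
  ultimately obtain E where "size E + 1 = length Hs" "strictly_dominated E (mset (map card Hs))"
      "face_poly (gen_complex (set Hs)) =
         (\<Sum>k\<in>#mset (map card Hs). [:1, 1:] ^ k) - (\<Sum>k\<in>#E. [:1, 1:] ^ k)"
    using face_poly_gen_complex_leaf_order[OF _ Hs(1,3)] by blast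
  moreover have "mset (map card Hs) = facet_sizes \<Delta>"
    unfolding facet_sizes_def using Hs(1,2) by (simp flip: mset_set_set)
  moreover have "length Hs = card (facets \<Delta>)"
    using distinct_card[OF Hs(1)] Hs(2) by simp
  moreover have "gen_complex (set Hs) = \<Delta>"
    using Hs(2) gen_complex_facets[OF assms(2,3)] by simp
  ultimately show ?thesis
    by auto
qed

theorem lemma2p2:
  fixes n s d :: nat and \<Delta> :: "nat set set"
  assumes "n \<ge> 1"
    and "simplicial_complex n \<Delta>"
    and "quasi_forest \<Delta>"
    and "d = max_face_size \<Delta>"
    and "card (facets \<Delta>) = s + 1"
  shows "\<exists>t (\<delta> :: nat \<Rightarrow> nat) (e :: nat \<Rightarrow> nat). t \<le> s \<and>
    (\<forall>i\<in>{1..t+1}. \<forall>j\<in>{1..t}. \<delta> i \<noteq> e j) \<and>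
    0 < \<delta> 1 \<and> (\<forall>j\<in>{1..t}. \<delta> j \<le> \<delta> (j+1)) \<and> \<delta> (t+1) = d \<and>
    (\<forall>j. 1 \<le> j \<and> j < t \<longrightarrow> e j \<le> e (j+1)) \<and> (\<forall>j\<in>{1..t}. e j < d) \<and>
    (\<forall>j\<in>{1..t}. e j < \<delta> j) \<and>
    (\<Sum>i=0..d. monom (int (face_count \<Delta> i)) i) =
      (\<Sum>j=1..t+1. [:1, 1:] ^ \<delta> j) - (\<Sum>j=1..t. [:1, 1::int:] ^ e j)"
proof -
  have fin: "finite \<Delta>" "\<forall>F\<in>\<Delta>. finite F"
    using simplicial_complex_finite[OF assms(2)] by auto
  have "{1} \<in> \<Delta>" and closed: "\<forall>F\<in>\<Delta>. Pow F \<subseteq> \<Delta>"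
    using assms(1,2) unfolding simplicial_complex_def by auto
  obtain E0 where E0: "size E0 + 1 = card (facets \<Delta>)" "strictly_dominated E0 (facet_sizes \<Delta>)"
    "face_poly \<Delta> = (\<Sum>k\<in>#facet_sizes \<Delta>. [:1, 1:] ^ k) - (\<Sum>k\<in>#E0. [:1, 1:] ^ k)"
    using quasi_forest_face_poly[OF assms(3) fin(1) closed] \<open>{1} \<in> \<Delta>\<close> by blast
  obtain R D E where DE: "facet_sizes \<Delta> = D + R" "E0 = E + R" "strictly_dominated E D"
    "set_mset D \<inter> set_mset E = {}" "Max_mset D = Max_mset (facet_sizes \<Delta>)"
    using strictly_dominated_remove_common[OF E0(2)] .
  have size: "size D = size E + 1" "size E \<le> s"
    using E0(1) assms(5) DE(1,2) size_facet_sizes[OF fin(1)] by auto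
  note sorted = sorted_entries_if_strictly_dominated[OF DE(3,4) size(1)]
  have "\<forall>A\<in>\<Delta>. card A \<le> d"
    using assms(4) fin(1) unfolding max_face_size_def by simp
  then have poly: "(\<Sum>i=0..d. monom (int (face_count \<Delta> i)) i) =
      (\<Sum>j=1..size E + 1. [:1, 1:] ^ sorted_entry D j) - (\<Sum>j=1..size E. [:1, 1:] ^ sorted_entry E j)"
    unfolding sorted(8,9) using face_poly_eq_face_counts[OF fin(1)] E0(3) DE(1,2) by simp
  have max: "Max_mset D = d"
    using DE(5) assms(4) Max_mset_facet_sizes[OF fin] by simp
  have pos: "0 < sorted_entry D 1"
    using facet_sizes_pos[OF fin \<open>{1} \<in> \<Delta>\<close>] DE(1) sorted(6) by simp
  show ?thesis
    by (rule exI[of _ "size E"], rule exI[of _ "sorted_entry D"], rule exI[of _ "sorted_entry E"])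
      (use size(2) poly max pos sorted(1-7) in auto)
qed

end
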